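(* Let $(b,c)$ be a connected graph over a countable set $X$, $G$ a nilpotent group acting cocompactly on $X$ with $H_{b,c}$ $G$-invariant, and $x_0\in X$. Let $R$ be a normal subgroup of $G$ and $Q(R)=\pi^{-1}(Z(G/R))$ with $\pi:G\to G/R$ the projection. Then every harmonic $k\in\mathrm{ex}\,\mathcal{K}^R$ is $Q(R)$-multiplicative.
   Context: A graph over $X$ is $(b,c)$ with $b:X\times X\to[0,\infty)$, $c:X\to\mathbb{R}$, $\sum_yb(x,y)<\infty$ ($b$ need not be symmetric); connected: any two points are joined by a finite sequence $y_1,\dots,y_n$ with $b(y_i,y_{i+1})>0$. $H_{b,c}f(x)=\sum_yb(x,y)(f(x)-f(y))+c(x)f(x)$ on $\mathrm{Dom}(H)=\{f:\sum_yb(x,y)|f(y)|<\infty\ \forall x\}$; harmonic: $Hf=0$; $\mathcal{H}^+$: nonnegative nonzero harmonic functions. $T_gf(x)=f(g^{-1}x)$; cocompact: $GV=X$ for some finite $V$; $H$ is $G$-invariant if $T_g$ preserves $\mathrm{Dom}(H)$ and $HT_g=T_gH$. $\mathcal{K}$ is the closure in $C(X)$ (product topology) of $\{f\in\mathcal{H}^+:f(x_0)=1\}$, $\mathcal{K}^R=\{f\in\mathcal{K}:T_rf=f\ \forall r\in R\}$, $\mathrm{ex}$ = extreme points. For a subgroup $S$, $f$ is $S$-multiplicative if there is a homomorphism $\gamma:S\to(0,\infty)$ with $T_gf=\gamma(g^{-1})f$ for all $g\in S$. *)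

theory Defs
  imports "HOL-Analysis.Analysis" "HOL-Algebra.Group_Action" "HOL-Algebra.Generated_Groups" "HOL-Library.Countable"
begin

definition graph_on :: "('x \<Rightarrow> 'x \<Rightarrow> real) \<Rightarrow> bool" where
  "graph_on b \<longleftrightarrow> (\<forall>x y. b x y \<ge> 0) \<and> (\<forall>x. b x summable_on UNIV)"

definition connected_graph :: "('x \<Rightarrow> 'x \<Rightarrow> real) \<Rightarrow> bool" where
  "connected_graph b \<longleftrightarrow> (\<forall>x y. (\<lambda>u v. b u v > 0)\<^sup>*\<^sup>* x y)"

definition dom_H :: "('x \<Rightarrow> 'x \<Rightarrow> real) \<Rightarrow> ('x \<Rightarrow> real) set" where
  "dom_H b = {f. \<forall>x. (\<lambda>y. b x y * \<bar>f y\<bar>) summable_on UNIV}"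

definition H_op :: "('x \<Rightarrow> 'x \<Rightarrow> real) \<Rightarrow> ('x \<Rightarrow> real) \<Rightarrow> ('x \<Rightarrow> real) \<Rightarrow> 'x \<Rightarrow> real" where
  "H_op b c f x = (\<Sum>\<^sub>\<infinity>y. b x y * (f x - f y)) + c x * f x"

definition harmonic :: "('x \<Rightarrow> 'x \<Rightarrow> real) \<Rightarrow> ('x \<Rightarrow> real) \<Rightarrow> ('x \<Rightarrow> real) \<Rightarrow> bool" where
  "harmonic b c f \<longleftrightarrow> f \<in> dom_H b \<and> H_op b c f = (\<lambda>x. 0)"

definition pos_harmonic :: "('x \<Rightarrow> 'x \<Rightarrow> real) \<Rightarrow> ('x \<Rightarrow> real) \<Rightarrow> ('x \<Rightarrow> real) set" where
  "pos_harmonic b c = {f. harmonic b c f \<and> (\<forall>x. f x \<ge> 0) \<and> f \<noteq> (\<lambda>x. 0)}"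

definition K_set :: "('x \<Rightarrow> 'x \<Rightarrow> real) \<Rightarrow> ('x \<Rightarrow> real) \<Rightarrow> 'x \<Rightarrow> ('x \<Rightarrow> real) set" where
  "K_set b c x0 = closure {f \<in> pos_harmonic b c. f x0 = 1}"

definition transl :: "('g, 'm) monoid_scheme \<Rightarrow> ('g \<Rightarrow> 'x \<Rightarrow> 'x) \<Rightarrow> 'g \<Rightarrow> ('x \<Rightarrow> real) \<Rightarrow> 'x \<Rightarrow> real" where
  "transl G \<phi> g f = (\<lambda>x. f (\<phi> (inv\<^bsub>G\<^esub> g) x))"

definition cocompact :: "('g, 'm) monoid_scheme \<Rightarrow> ('g \<Rightarrow> 'x \<Rightarrow> 'x) \<Rightarrow> bool" where
  "cocompact G \<phi> \<longleftrightarrow> (\<exists>V. finite V \<and> (\<Union>g\<in>carrier G. \<phi> g ` V) = UNIV)"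

definition H_invariant :: "('g, 'm) monoid_scheme \<Rightarrow> ('g \<Rightarrow> 'x \<Rightarrow> 'x) \<Rightarrow> ('x \<Rightarrow> 'x \<Rightarrow> real) \<Rightarrow> ('x \<Rightarrow> real) \<Rightarrow> bool" where
  "H_invariant G \<phi> b c \<longleftrightarrow> (\<forall>g\<in>carrier G. \<forall>f\<in>dom_H b.
      transl G \<phi> g f \<in> dom_H b \<and> H_op b c (transl G \<phi> g f) = transl G \<phi> g (H_op b c f))"

definition K_fixed :: "('g, 'm) monoid_scheme \<Rightarrow> ('g \<Rightarrow> 'x \<Rightarrow> 'x) \<Rightarrow> ('x \<Rightarrow> 'x \<Rightarrow> real) \<Rightarrow> ('x \<Rightarrow> real) \<Rightarrow> 'x \<Rightarrow> 'g set \<Rightarrow> ('x \<Rightarrow> real) set" where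
  "K_fixed G \<phi> b c x0 R = {f \<in> K_set b c x0. \<forall>r\<in>R. transl G \<phi> r f = f}"

definition extreme_points :: "('x \<Rightarrow> real) set \<Rightarrow> ('x \<Rightarrow> real) set" where
  "extreme_points S = {f \<in> S. \<not> (\<exists>g\<in>S. \<exists>h\<in>S. \<exists>t::real. g \<noteq> h \<and> 0 < t \<and> t < 1 \<and>
       f = (\<lambda>x. t * g x + (1 - t) * h x))}"

definition multiplicative :: "('g, 'm) monoid_scheme \<Rightarrow> ('g \<Rightarrow> 'x \<Rightarrow> 'x) \<Rightarrow> 'g set \<Rightarrow> ('x \<Rightarrow> real) \<Rightarrow> bool" where
  "multiplicative G \<phi> S f \<longleftrightarrow> (\<exists>\<gamma> :: 'g \<Rightarrow> real.
      (\<forall>g\<in>S. \<gamma> g > 0) \<and> (\<forall>g\<in>S. \<forall>h\<in>S. \<gamma> (g \<otimes>\<^bsub>G\<^esub> h) = \<gamma> g * \<gamma> h) \<and>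
      (\<forall>g\<in>S. transl G \<phi> g f = (\<lambda>x. \<gamma> (inv\<^bsub>G\<^esub> g) * f x)))"

definition group_center :: "('g, 'm) monoid_scheme \<Rightarrow> 'g set" where
  "group_center G = {z \<in> carrier G. \<forall>x\<in>carrier G. z \<otimes>\<^bsub>G\<^esub> x = x \<otimes>\<^bsub>G\<^esub> z}"

definition Qsub :: "('g, 'm) monoid_scheme \<Rightarrow> 'g set \<Rightarrow> 'g set" where
  "Qsub G R = {g \<in> carrier G. R #>\<^bsub>G\<^esub> g \<in> group_center (G Mod R)}"

fun lower_central :: "('g, 'm) monoid_scheme \<Rightarrow> nat \<Rightarrow> 'g set" where
  "lower_central G 0 = carrier G"
| "lower_central G (Suc n) = generate G
     {g \<otimes>\<^bsub>G\<^esub> h \<otimes>\<^bsub>G\<^esub> inv\<^bsub>G\<^esub> g \<otimes>\<^bsub>G\<^esub> inv\<^bsub>G\<^esub> h | g h. g \<in> carrier G \<and> h \<in> lower_central G n}"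

definition nilpotent_group :: "('g, 'm) monoid_scheme \<Rightarrow> bool" where
  "nilpotent_group G \<longleftrightarrow> group G \<and> (\<exists>n. lower_central G n = {\<one>\<^bsub>G\<^esub>})"

end

theory Submission
  imports Defs
begin

text \<open>
  For \<open>q \<in> Q(R)\<close> and \<open>a \<in> G\<close> the elements \<open>qa\<close> and \<open>aq\<close> differ by a factor in \<open>R\<close>, so on
  \<open>R\<close>-invariant functions the translation by \<open>q\<close> commutes with every translation.
  Combined with Harnack's inequality on the finitely many orbit representatives given by
  cocompactness, this yields \<open>k (q x) \<le> M k x\<close> for a harmonic \<open>k \<in> \<K>\<^sup>R\<close>. Hence \<open>k\<close> is a
  proper convex combination of the normalised translate \<open>k (q \<cdot>) / k (q x\<^sub>0)\<close> and of
  the normalised remainder, both again in \<open>\<K>\<^sup>R\<close>. If \<open>k\<close> is extreme, it equals the normalised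
  translate, i.e. \<open>k (q x) = k (q x\<^sub>0) k x\<close>, which is the multiplicativity.
\<close>

lemma summable_on_diff:
  fixes f g :: "'a \<Rightarrow> real"
  assumes "f summable_on A" "g summable_on A"
  shows "(\<lambda>x. f x - g x) summable_on A"
  using summable_on_add[OF assms(1) summable_on_uminus[THEN iffD2, OF assms(2)]] by simp

lemma infsum_diff:
  fixes f g :: "'a \<Rightarrow> real"
  assumes "f summable_on A" "g summable_on A"
  shows "(\<Sum>\<^sub>\<infinity>x\<in>A. f x - g x) = infsum f A - infsum g A"
  using infsum_add[OF assms(1) summable_on_uminus[THEN iffD2, OF assms(2)]] by (simp add: infsum_uminus)

lemma dom_H_summable:
  assumes "graph_on b" and "f \<in> dom_H b"
  shows "(\<lambda>y. b x y * f y) summable_on UNIV"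
proof (rule abs_summable_summable)
  show "Infinite_Sum.abs_summable_on (\<lambda>y. b x y * f y) UNIV"
    using assms by (simp add: graph_on_def dom_H_def abs_mult)
qed

lemma dom_H_summable_diff:
  assumes "graph_on b" and "f \<in> dom_H b"
  shows "(\<lambda>y. b x y * (f x - f y)) summable_on UNIV"
proof -
  have "(\<lambda>y. b x y * f x) summable_on UNIV"
    using assms(1) by (intro summable_on_cmult_left) (simp add: graph_on_def)
  from summable_on_diff[OF this dom_H_summable[OF assms]] show ?thesis
    by (simp add: algebra_simps)
qed

lemma harmonic_lincomb:
  assumes "graph_on b" and "harmonic b c f" and "harmonic b c g"
  shows "harmonic b c (\<lambda>x. \<alpha> * f x + \<beta> * g x)"
proof -
  have b_nonneg: "\<And>x y. b x y \<ge> 0" using assms(1) by (simp add: graph_on_def)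
  have f: "f \<in> dom_H b" and g: "g \<in> dom_H b" using assms by (simp_all add: harmonic_def)
  have "(\<lambda>y. b x y * \<bar>\<alpha> * f y + \<beta> * g y\<bar>) summable_on UNIV" for x
  proof (rule summable_on_comparison_test)
    show "(\<lambda>y. \<bar>\<alpha>\<bar> * (b x y * \<bar>f y\<bar>) + \<bar>\<beta>\<bar> * (b x y * \<bar>g y\<bar>)) summable_on UNIV"
      using f g by (intro summable_on_add summable_on_cmult_right) (simp_all add: dom_H_def)
    fix y
    have "\<bar>\<alpha> * f y + \<beta> * g y\<bar> \<le> \<bar>\<alpha>\<bar> * \<bar>f y\<bar> + \<bar>\<beta>\<bar> * \<bar>g y\<bar>"
      by (metis abs_mult abs_triangle_ineq)
    from mult_left_mono[OF this b_nonneg[of x y]]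
    show "b x y * \<bar>\<alpha> * f y + \<beta> * g y\<bar> \<le> \<bar>\<alpha>\<bar> * (b x y * \<bar>f y\<bar>) + \<bar>\<beta>\<bar> * (b x y * \<bar>g y\<bar>)"
      by (simp add: algebra_simps)
    show "0 \<le> b x y * \<bar>\<alpha> * f y + \<beta> * g y\<bar>" using b_nonneg by simp
  qed
  then have dom: "(\<lambda>x. \<alpha> * f x + \<beta> * g x) \<in> dom_H b" by (simp add: dom_H_def)
  have "H_op b c (\<lambda>x. \<alpha> * f x + \<beta> * g x) x = \<alpha> * H_op b c f x + \<beta> * H_op b c g x" for x
  proof -
    have "(\<Sum>\<^sub>\<infinity>y. b x y * ((\<alpha> * f x + \<beta> * g x) - (\<alpha> * f y + \<beta> * g y)))
        = (\<Sum>\<^sub>\<infinity>y. \<alpha> * (b x y * (f x - f y)) + \<beta> * (b x y * (g x - g y)))"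
      by (simp add: algebra_simps)
    also have "\<dots> = (\<Sum>\<^sub>\<infinity>y. \<alpha> * (b x y * (f x - f y))) + (\<Sum>\<^sub>\<infinity>y. \<beta> * (b x y * (g x - g y)))"
      using f g assms(1) by (intro infsum_add summable_on_cmult_right dom_H_summable_diff)
    also have "\<dots> = \<alpha> * (\<Sum>\<^sub>\<infinity>y. b x y * (f x - f y)) + \<beta> * (\<Sum>\<^sub>\<infinity>y. b x y * (g x - g y))"
      by (simp add: infsum_cmult_right')
    finally show ?thesis by (simp add: H_op_def algebra_simps)
  qed
  with dom assms(2,3) show ?thesis by (simp add: harmonic_def fun_eq_iff)
qed

lemma harmonic_cmult:
  assumes "graph_on b" and "harmonic b c f"
  shows "harmonic b c (\<lambda>x. \<alpha> * f x)"
  using harmonic_lincomb[OF assms assms(2), of \<alpha> 0] by simp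

lemma harmonic_weighted_sum:
  assumes "graph_on b" and "harmonic b c f"
  shows "(\<Sum>\<^sub>\<infinity>z. b y z * f z) = ((\<Sum>\<^sub>\<infinity>z. b y z) + c y) * f y"
proof -
  have f: "f \<in> dom_H b" using assms(2) by (simp add: harmonic_def)
  have b_y: "b y summable_on UNIV" using assms(1) by (simp add: graph_on_def)
  have "0 = (\<Sum>\<^sub>\<infinity>z. b y z * f y - b y z * f z) + c y * f y"
    using assms(2) by (simp add: harmonic_def H_op_def fun_eq_iff algebra_simps)
  also have "\<dots> = (\<Sum>\<^sub>\<infinity>z. b y z) * f y - (\<Sum>\<^sub>\<infinity>z. b y z * f z) + c y * f y"
    using infsum_diff[OF summable_on_cmult_left[OF b_y] dom_H_summable[OF assms(1) f]]
    by (simp add: infsum_cmult_left')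
  finally show ?thesis by (simp add: algebra_simps)
qed

lemma harmonic_nonneg_edge_le:
  assumes "graph_on b" and "harmonic b c f" and "\<And>z. f z \<ge> 0"
  shows "b y z * f z \<le> ((\<Sum>\<^sub>\<infinity>w. b y w) + c y) * f y"
proof -
  have "b y z * f z = (\<Sum>\<^sub>\<infinity>w\<in>{z}. b y w * f w)" by simp
  also have "\<dots> \<le> (\<Sum>\<^sub>\<infinity>w. b y w * f w)"
    using assms dom_H_summable[OF assms(1)]
    by (intro infsum_mono_neutral) (auto simp: graph_on_def harmonic_def)
  finally show ?thesis using harmonic_weighted_sum[OF assms(1,2)] by simp
qed

lemma harnack_rtranclp:
  assumes "graph_on b" and "(\<lambda>u v. b u v > 0)\<^sup>*\<^sup>* x y"
  shows "\<exists>C\<ge>0. \<forall>f. harmonic b c f \<and> (\<forall>z. f z \<ge> 0) \<longrightarrow> f y \<le> C * f x"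
  using assms(2)
proof (induction rule: rtranclp_induct)
  case base
  show ?case by (rule exI[of _ 1]) simp
next
  case (step y z)
  then obtain C where C: "C \<ge> 0" "\<forall>f. harmonic b c f \<and> (\<forall>z. f z \<ge> 0) \<longrightarrow> f y \<le> C * f x"
    by blast
  define D where "D = max 0 (((\<Sum>\<^sub>\<infinity>w. b y w) + c y) / b y z)"
  have "f z \<le> (D * C) * f x" if f: "harmonic b c f" "\<forall>z. f z \<ge> 0" for f
  proof -
    have "f z \<le> (((\<Sum>\<^sub>\<infinity>w. b y w) + c y) / b y z) * f y"
      using harmonic_nonneg_edge_le[OF assms(1) f(1), of y z] f(2) step.hyps(2)
      by (simp add: field_simps)
    also have "\<dots> \<le> D * f y" unfolding D_def using f(2) by (intro mult_right_mono) auto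
    also have "\<dots> \<le> D * (C * f x)" using C f unfolding D_def by (simp add: mult_left_mono)
    finally show ?thesis by simp
  qed
  moreover have "D * C \<ge> 0" using C unfolding D_def by simp
  ultimately show ?case by blast
qed

lemma harnack_connected:
  assumes "graph_on b" and "connected_graph b"
  shows "\<exists>C\<ge>0. \<forall>f. harmonic b c f \<and> (\<forall>z. f z \<ge> 0) \<longrightarrow> f y \<le> C * f x"
  using harnack_rtranclp[OF assms(1)] assms(2) unfolding connected_graph_def by blast

lemma harmonic_nonneg_pos:
  assumes "graph_on b" and "connected_graph b"
    and "harmonic b c f" and "\<And>z. f z \<ge> 0" and "f x0 > 0"
  shows "f x > 0"
proof -
  obtain C where "C \<ge> 0" and "f x0 \<le> C * f x"
    using harnack_connected[OF assms(1,2), of c x0 x] assms(3,4) by blast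
  with assms(4)[of x] assms(5) show ?thesis by (cases "f x = 0") (auto simp: le_less)
qed

lemma K_set_subset: "K_set b c x0 \<subseteq> {f. f x0 = 1 \<and> (\<forall>x. f x \<ge> 0)}"
proof -
  have "closed {f :: 'a \<Rightarrow> real. f x0 = 1}" by (auto intro!: closed_Collect_eq)
  moreover have "closed {f :: 'a \<Rightarrow> real. f x \<ge> 0}" for x by (auto intro!: closed_Collect_le)
  ultimately have "closed ({f :: 'a \<Rightarrow> real. f x0 = 1} \<inter> (\<Inter>x. {f. f x \<ge> 0}))" by blast
  then have "K_set b c x0 \<subseteq> {f. f x0 = 1} \<inter> (\<Inter>x. {f. f x \<ge> 0})"
    unfolding K_set_def by (rule closure_minimal[rotated]) (auto simp: pos_harmonic_def)
  then show ?thesis by auto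
qed

lemma K_setI:
  assumes "harmonic b c f" and "\<And>x. f x \<ge> 0" and "f x0 = 1"
  shows "f \<in> K_set b c x0"
proof -
  have "f \<in> {f \<in> pos_harmonic b c. f x0 = 1}" using assms by (auto simp: pos_harmonic_def)
  then show ?thesis unfolding K_set_def by (rule closure_subset[THEN subsetD])
qed

lemma K_set_harmonic_pos:
  assumes "graph_on b" and "connected_graph b" and "harmonic b c k" and "k \<in> K_set b c x0"
  shows "k x > 0"
proof -
  from K_set_subset[of b c x0] assms(4) have "\<And>z. k z \<ge> 0" and "k x0 > 0" by auto
  then show ?thesis by (rule harmonic_nonneg_pos[OF assms(1-3)])
qed

lemma harmonic_comp_action:
  assumes "group G" and "H_invariant G \<phi> b c" and "a \<in> carrier G" and "harmonic b c f"
  shows "harmonic b c (\<lambda>y. f (\<phi> a y))"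
proof -
  have "inv\<^bsub>G\<^esub> a \<in> carrier G" using assms(1,3) by (rule group.inv_closed)
  with assms(2,4) have "transl G \<phi> (inv\<^bsub>G\<^esub> a) f \<in> dom_H b"
    and "H_op b c (transl G \<phi> (inv\<^bsub>G\<^esub> a) f) = transl G \<phi> (inv\<^bsub>G\<^esub> a) (H_op b c f)"
    by (auto simp: H_invariant_def harmonic_def)
  then have "harmonic b c (transl G \<phi> (inv\<^bsub>G\<^esub> a) f)"
    using assms(4) by (simp add: harmonic_def transl_def)
  then show ?thesis using assms(1,3) by (simp add: transl_def group.inv_inv)
qed

text \<open>
  With \<open>t = h x\<^sub>0 / (2M)\<close>, \<open>k = t (h / h x\<^sub>0) + (1 - t) g\<close> for \<open>g = (k - h / (2M)) / (1 - t)\<close>;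
  the factor \<open>2\<close> keeps \<open>t < 1\<close> and \<open>g\<close> nonnegative.
\<close>
lemma extreme_point_dominated_proportional:
  assumes "graph_on b"
    and k: "k \<in> extreme_points (K_fixed G \<phi> b c x0 R)" "harmonic b c k"
    and h: "harmonic b c h" "\<And>y. h y \<ge> 0" "h x0 > 0" "\<And>y. h y \<le> M * k y"
    and h_inv: "\<And>r. r \<in> R \<Longrightarrow> transl G \<phi> r h = h"
  shows "h = (\<lambda>x. h x0 * k x)"
proof -
  have kK: "k \<in> K_set b c x0" and k_inv: "\<And>r. r \<in> R \<Longrightarrow> transl G \<phi> r k = k"
    using k(1) by (auto simp: extreme_points_def K_fixed_def)
  have k_x0: "k x0 = 1" and k_nonneg: "\<And>x. k x \<ge> 0"
    using K_set_subset[of b c x0] kK by auto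
  have M: "h x0 \<le> M" "M > 0" using h(3) h(4)[of x0] k_x0 by auto
  define t where "t = h x0 / (2 * M)"
  have t: "0 < t" "t < 1" using M h(3) by (auto simp: t_def field_simps)
  define f where "f x = h x / h x0" for x
  define u where "u x = k x - h x / (2 * M)" for x
  define g where "g x = u x / (1 - t)" for x
  have k_split: "k = (\<lambda>x. t * f x + (1 - t) * g x)"
    using t h(3) by (auto simp: fun_eq_iff f_def g_def u_def t_def)
  have "u x \<ge> 0" for x
    using mult_left_mono[OF h(4)[of x], of "1 / (2 * M)"] M k_nonneg[of x] by (simp add: u_def)
  then have "g x \<ge> 0" for x using t by (simp add: g_def)
  moreover have "harmonic b c g"
  proof -
    have "harmonic b c u"
      using harmonic_lincomb[OF assms(1) k(2) h(1), of 1 "- 1 / (2 * M)"] by (simp add: u_def[abs_def])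
    from harmonic_cmult[OF assms(1) this, of "1 / (1 - t)"] show ?thesis by (simp add: g_def[abs_def])
  qed
  moreover have "g x0 = 1"
  proof -
    have "u x0 = 1 - t" using k_x0 by (simp add: u_def t_def)
    then show ?thesis using t by (simp add: g_def)
  qed
  moreover have "transl G \<phi> r g = g" if "r \<in> R" for r
    using k_inv[OF that] h_inv[OF that] by (simp add: transl_def fun_eq_iff g_def u_def)
  ultimately have g_inK: "g \<in> K_fixed G \<phi> b c x0 R" by (simp add: K_fixed_def K_setI)
  have "f x \<ge> 0" for x using h(2,3) by (simp add: f_def)
  moreover have "harmonic b c f"
    using harmonic_cmult[OF assms(1) h(1), of "1 / h x0"] by (simp add: f_def[abs_def])
  moreover have "f x0 = 1" using h(3) by (simp add: f_def)
  moreover have "transl G \<phi> r f = f" if "r \<in> R" for r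
    using h_inv[OF that] by (simp add: transl_def fun_eq_iff f_def)
  ultimately have f_inK: "f \<in> K_fixed G \<phi> b c x0 R" by (simp add: K_fixed_def K_setI)
  have "f = g" using k(1) f_inK g_inK t k_split unfolding extreme_points_def by blast
  then have "k = f" using k_split by (simp add: algebra_simps)
  then show ?thesis using h(3) by (simp add: fun_eq_iff f_def)
qed

lemma group_action_imp_group: "group_action G E \<phi> \<Longrightarrow> group G"
  unfolding group_action_def group_hom_def by blast

lemma Qsub_commute_mod:
  fixes G (structure)
  assumes "R \<lhd> G" and "q \<in> Qsub G R" and "a \<in> carrier G"
  shows "\<exists>s\<in>R. q \<otimes>\<^bsub>G\<^esub> a = s \<otimes>\<^bsub>G\<^esub> (a \<otimes>\<^bsub>G\<^esub> q)"
proof -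
  interpret normal R G by (rule assms(1))
  have q: "q \<in> carrier G" "R #> q \<in> group_center (G Mod R)"
    using assms(2) by (auto simp: Qsub_def)
  have "R #> a \<in> carrier (G Mod R)" using assms(3) by (simp add: carrier_FactGroup)
  with q(2) have "(R #> q) <#> (R #> a) = (R #> a) <#> (R #> q)"
    by (simp add: group_center_def)
  then have "R #> (q \<otimes> a) = R #> (a \<otimes> q)" using q(1) assms(3) by (simp add: rcos_sum)
  moreover have "q \<otimes> a \<in> R #> (q \<otimes> a)"
    using q(1) assms(3) by (intro rcos_self) (auto intro: subgroup_axioms)
  ultimately show ?thesis by (auto simp: r_coset_def)
qed

lemma transl_invariant_apply:
  fixes G (structure)
  assumes "R \<lhd> G" and "\<And>r. r \<in> R \<Longrightarrow> transl G \<phi> r k = k" and "s \<in> R"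
  shows "k (\<phi> s y) = k y"
proof -
  interpret normal R G by (rule assms(1))
  have "inv s \<in> R" using assms(3) by (rule m_inv_closed)
  from assms(2)[OF this] have "k (\<phi> (inv (inv s)) y) = k y" unfolding transl_def by metis
  then show ?thesis using assms(3) subset by auto
qed

lemma Qsub_translations_commute:
  fixes G (structure)
  assumes "R \<lhd> G" and "group_action G UNIV \<phi>"
    and "\<And>r. r \<in> R \<Longrightarrow> transl G \<phi> r k = k"
    and "q \<in> Qsub G R" and "a \<in> carrier G"
  shows "k (\<phi> q (\<phi> a y)) = k (\<phi> a (\<phi> q y))"
proof -
  interpret normal R G by (rule assms(1))
  interpret group_action G UNIV \<phi> by (rule assms(2))
  have q: "q \<in> carrier G" using assms(4) by (simp add: Qsub_def)
  obtain s where s: "s \<in> R" "q \<otimes> a = s \<otimes> (a \<otimes> q)"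
    using Qsub_commute_mod[OF assms(1,4,5)] by blast
  have "\<phi> q (\<phi> a y) = \<phi> s (\<phi> a (\<phi> q y))"
    using s q assms(5) subset by (metis UNIV_I composition_rule m_closed subsetD)
  then show ?thesis using transl_invariant_apply[OF assms(1,3) s(1)] by simp
qed

lemma cocompact_translate_le:
  assumes "graph_on b" and "connected_graph b"
    and "group_action G UNIV \<phi>" and "cocompact G \<phi>" and "H_invariant G \<phi> b c"
    and "harmonic b c k" and "\<And>x. k x \<ge> 0"
    and commute: "\<And>a y. a \<in> carrier G \<Longrightarrow> k (\<phi> q (\<phi> a y)) = k (\<phi> a (\<phi> q y))"
  shows "\<exists>M. \<forall>x. k (\<phi> q x) \<le> M * k x"
proof -
  interpret group_action G UNIV \<phi> by (rule assms(3))
  interpret group G using assms(3) by (rule group_action_imp_group)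
  obtain V where V: "finite V" "(\<Union>a\<in>carrier G. \<phi> a ` V) = UNIV"
    using assms(4) by (auto simp: cocompact_def)
  have "\<forall>v\<in>V. \<exists>C\<ge>0. \<forall>f. harmonic b c f \<and> (\<forall>z. f z \<ge> 0) \<longrightarrow> f (\<phi> q v) \<le> C * f v"
    using harnack_connected[OF assms(1,2)] by blast
  then obtain C where C: "\<And>v. v \<in> V \<Longrightarrow> C v \<ge> 0"
    "\<And>v f. v \<in> V \<Longrightarrow> harmonic b c f \<Longrightarrow> \<forall>z. f z \<ge> 0 \<Longrightarrow> f (\<phi> q v) \<le> C v * f v"
    by metis
  have "k (\<phi> q x) \<le> (\<Sum>v\<in>V. C v) * k x" for x
  proof -
    obtain a v where a: "a \<in> carrier G" and v: "v \<in> V" and x: "x = \<phi> a v"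
      using V(2) by blast
    have "k (\<phi> q x) = k (\<phi> a (\<phi> q v))" using commute[OF a] x by simp
    also have "\<dots> \<le> C v * k (\<phi> a v)"
      using C(2)[OF v harmonic_comp_action[OF group_axioms assms(5) a assms(6)]] assms(7) by blast
    also have "\<dots> \<le> (\<Sum>v\<in>V. C v) * k (\<phi> a v)"
      using assms(7) v V(1) C(1) by (intro mult_right_mono member_le_sum) auto
    finally show ?thesis using x by simp
  qed
  then show ?thesis by blast
qed

lemma multiplicativeI_translate_proportional:
  fixes G (structure)
  assumes "group_action G UNIV \<phi>" and "S \<subseteq> carrier G"
    and "k x0 = 1" and "\<And>x. k x > 0"
    and proportional: "\<And>q x. q \<in> S \<Longrightarrow> k (\<phi> q x) = k (\<phi> q x0) * k x"
  shows "multiplicative G \<phi> S k"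
proof -
  interpret group_action G UNIV \<phi> by (rule assms(1))
  interpret group G using assms(1) by (rule group_action_imp_group)
  define \<gamma> where "\<gamma> g = k (\<phi> g x0)" for g
  have "\<gamma> (g \<otimes> h) = \<gamma> g * \<gamma> h" if "g \<in> S" "h \<in> S" for g h
  proof -
    have "\<phi> (g \<otimes> h) x0 = \<phi> g (\<phi> h x0)" using that assms(2) by (intro composition_rule) auto
    then show ?thesis using proportional[OF that(1), of "\<phi> h x0"] by (simp add: \<gamma>_def)
  qed
  moreover have "transl G \<phi> g k = (\<lambda>x. \<gamma> (inv g) * k x)" if g: "g \<in> S" for g
  proof
    fix x
    have g_G: "g \<in> carrier G" using g assms(2) by auto
    have "\<phi> \<one> y = y" for y
      by (metis id_eq_one UNIV_I restrict_apply')
    then have "\<phi> g (\<phi> (inv g) y) = y" for y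
      using g_G by (simp add: composition_rule[symmetric])
    then have undo: "k y = \<gamma> g * k (\<phi> (inv g) y)" for y
      using proportional[OF g, of "\<phi> (inv g) y"] by (simp add: \<gamma>_def)
    have "\<gamma> g * \<gamma> (inv g) = 1" using undo[of x0] assms(3) by (simp add: \<gamma>_def)
    moreover have "\<gamma> g > 0" using assms(4) by (simp add: \<gamma>_def)
    ultimately show "transl G \<phi> g k x = \<gamma> (inv g) * k x"
      using undo[of x] by (simp add: transl_def field_simps)
  qed
  moreover have "\<gamma> g > 0" for g using assms(4) by (simp add: \<gamma>_def)
  ultimately show ?thesis unfolding multiplicative_def by blast
qed

lemma extreme_point_Qsub_translate_proportional:
  assumes "graph_on b" and "connected_graph b"
    and "group_action G UNIV \<phi>" and "cocompact G \<phi>" and "H_invariant G \<phi> b c" and "R \<lhd> G"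
    and "harmonic b c k" and extreme: "k \<in> extreme_points (K_fixed G \<phi> b c x0 R)"
    and q: "q \<in> Qsub G R"
  shows "k (\<phi> q x) = k (\<phi> q x0) * k x"
proof -
  have kK: "k \<in> K_set b c x0" and k_inv: "\<And>r. r \<in> R \<Longrightarrow> transl G \<phi> r k = k"
    using extreme by (auto simp: extreme_points_def K_fixed_def)
  have k_nonneg: "\<And>x. k x \<ge> 0" using K_set_subset[of b c x0] kK by auto
  note k_pos = K_set_harmonic_pos[OF assms(1,2,7) kK]
  have q_G: "q \<in> carrier G" using q by (simp add: Qsub_def)
  note commute = Qsub_translations_commute[OF assms(6,3) k_inv q]
  obtain M where bound: "\<And>x. k (\<phi> q x) \<le> M * k x"
    using cocompact_translate_le[OF assms(1-5,7) k_nonneg commute] by blast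
  have invariant: "transl G \<phi> r (\<lambda>x. k (\<phi> q x)) = (\<lambda>x. k (\<phi> q x))" if r: "r \<in> R" for r
  proof -
    have "inv\<^bsub>G\<^esub> r \<in> carrier G"
      using assms(6) r by (meson normal_imp_subgroup subgroup.m_inv_closed subgroup.mem_carrier)
    then show ?thesis using commute k_inv[OF r] by (simp add: transl_def fun_eq_iff)
  qed
  note harmonic = harmonic_comp_action[OF group_action_imp_group[OF assms(3)] assms(5) q_G assms(7)]
  from extreme_point_dominated_proportional[OF assms(1) extreme assms(7) harmonic k_nonneg k_pos
      bound invariant]
  show ?thesis by metis
qed

theorem lemma5:
  fixes b :: "'x::countable \<Rightarrow> 'x \<Rightarrow> real" and c :: "'x \<Rightarrow> real"
    and G :: "'g monoid" and \<phi> :: "'g \<Rightarrow> 'x \<Rightarrow> 'x"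
    and x0 :: 'x and R :: "'g set" and k :: "'x \<Rightarrow> real"
  assumes "graph_on b" and "connected_graph b"
    and "nilpotent_group G" and "group_action G UNIV \<phi>" and "cocompact G \<phi>"
    and "H_invariant G \<phi> b c"
    and "R \<lhd> G"
    and "harmonic b c k" and "k \<in> extreme_points (K_fixed G \<phi> b c x0 R)"
  shows "multiplicative G \<phi> (Qsub G R) k"
proof -
  have kK: "k \<in> K_set b c x0" using assms(9) by (simp add: extreme_points_def K_fixed_def)
  have "Qsub G R \<subseteq> carrier G" by (auto simp: Qsub_def)
  moreover have "k x0 = 1" using K_set_subset[of b c x0] kK by auto
  ultimately show ?thesis
    using K_set_harmonic_pos[OF assms(1,2,8) kK]
      extreme_point_Qsub_translate_proportional[OF assms(1,2,4-9)]
    by (rule multiplicativeI_translate_proportional[OF assms(4), where k = k])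
qed

end
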